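(* Let $N\ge 2$ and fix real $\Omega\neq 0$ and real $\delta$. For each real coupling family $J=(J_{i,j})_{1\le i<j\le N}$, let $|\Psi_J\rangle$ be the ground state of $$\hat{H}_J = \Omega \sum_{i=1}^N \hat{\sigma}_i^x + \delta \sum_{i=1}^N \hat{\sigma}_i^z + \sum_{1\le i<j\le N} J_{i,j} \hat{\sigma}_i^z \hat{\sigma}_j^z$$ (which is unique up to phase since $\Omega\ne0$), and define the correlation functions $c_{i,j}(J)=\langle\Psi_J|\hat{S}_i^z \hat{S}_j^z|\Psi_J\rangle$ for $1\le i<j\le N$. Then the map $J\mapsto c(J)=(c_{i,j}(J))_{1\le i<j\le N}$ is injective; hence it is a bijection between the set of all real coupling families $J$ and the set of $J$-representable correlation families (its image). That is, if $c(J^{(1)})=c(J^{(2)})$ then $J^{(1)}=J^{(2)}$.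
   Context: $\hat\sigma_i^x,\hat\sigma_i^z$ are Pauli matrices acting on the $i$-th factor of $(\mathbb{C}^2)^{\otimes N}$, and $\hat S_i^z=\frac{\hbar}{2}\hat\sigma_i^z$ is the spin-$z$ operator on site $i$. A family $(c_{i,j})_{i<j}$ is called $J$-representable if it equals $c(J)$ for some real coupling family $J$, i.e. it arises as the ground-state two-point $z$-correlations of $\hat H_J$ for some choice of $J$ (with the given fixed $\Omega,\delta$). *)

theory Defs
  imports Complex_Main "Jordan_Normal_Form.Matrix" "Jordan_Normal_Form.Char_Poly"
begin

text \<open>Hilbert space (C^2)^{tensor N} with computational basis |b>, b < 2^N.
  Site i (1 <= i <= N) is the i-th tensor factor, i.e. bit (N - i) of b
  (most significant bit = first factor).\<close>

definition site_bit :: "nat \<Rightarrow> nat \<Rightarrow> nat" where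
  "site_bit N i = N - i"

definition sigma_x :: "nat \<Rightarrow> nat \<Rightarrow> complex mat" where
  "sigma_x N i = mat (2^N) (2^N)
     (\<lambda>(a, b). if a = flip_bit (site_bit N i) b then 1 else 0)"

definition sigma_z :: "nat \<Rightarrow> nat \<Rightarrow> complex mat" where
  "sigma_z N i = mat (2^N) (2^N)
     (\<lambda>(a, b). if a = b then (if bit b (site_bit N i) then -1 else 1) else 0)"

definition spin_z :: "real \<Rightarrow> nat \<Rightarrow> nat \<Rightarrow> complex mat" where
  "spin_z hbar N i = complex_of_real (hbar / 2) \<cdot>\<^sub>m sigma_z N i"

definition msum :: "nat \<Rightarrow> complex mat list \<Rightarrow> complex mat" where
  "msum n As = foldr (+) As (0\<^sub>m n n)"

definition hamiltonian :: "nat \<Rightarrow> real \<Rightarrow> real \<Rightarrow> (nat \<Rightarrow> nat \<Rightarrow> real) \<Rightarrow> complex mat" where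
  "hamiltonian N \<Omega> \<delta> J =
     msum (2^N) (map (\<lambda>i. complex_of_real \<Omega> \<cdot>\<^sub>m sigma_x N i) [1..<N+1])
   + msum (2^N) (map (\<lambda>i. complex_of_real \<delta> \<cdot>\<^sub>m sigma_z N i) [1..<N+1])
   + msum (2^N) (concat (map (\<lambda>i. map (\<lambda>j. complex_of_real (J i j) \<cdot>\<^sub>m (sigma_z N i * sigma_z N j))
                                    [i+1..<N+1]) [1..<N+1]))"

definition ground_state :: "complex mat \<Rightarrow> complex vec \<Rightarrow> bool" where
  "ground_state H \<psi> \<longleftrightarrow> \<psi> \<bullet>c \<psi> = 1 \<and>
     (\<exists>E::real. eigenvector H \<psi> (complex_of_real E) \<and> (\<forall>\<mu>. eigenvalue H \<mu> \<longrightarrow> E \<le> Re \<mu>))"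

definition expect :: "complex mat \<Rightarrow> complex vec \<Rightarrow> complex" where
  "expect A \<psi> = (A *\<^sub>v \<psi>) \<bullet>c \<psi>"

definition correlation :: "real \<Rightarrow> nat \<Rightarrow> complex vec \<Rightarrow> nat \<Rightarrow> nat \<Rightarrow> complex" where
  "correlation hbar N \<psi> i j = expect (spin_z hbar N i * spin_z hbar N j) \<psi>"

end

theory Submission
  imports Defs "HOL-Analysis.Function_Topology" "HOL-Analysis.Elementary_Metric_Spaces"
begin

text \<open>The Hamiltonians for [J1] and [J2] differ by the diagonal operator
  [V = \<Sum>i<j. (J1 i j - J2 i j) \<sigma>z_i \<sigma>z_j], whose expectation in any state is a linear combination of
  the zz-correlations, hence the same in [\<psi>1] and [\<psi>2]. The variational principle then gives
  [E1 \<le> <\<psi>2|H1|\<psi>2> = E2 + <V> \<le> <\<psi>1|H2|\<psi>1> + <V> = E1], so [\<psi>2] is also a ground state of [H1]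
  and [V \<psi>2 = (E1 - E2) \<psi>2]. Because [\<Omega> \<noteq> 0], a gauge transformation and Perron--Frobenius on
  the hypercube show that [\<psi>2] has no vanishing component in the [\<sigma>z] basis, so the diagonal of
  [V] is constant; a second difference over four basis states then isolates each coupling
  difference, which must vanish.\<close>

section \<open>Hermitian forms and the variational principle\<close>

text \<open>Operators and vectors on [\<complex>^n] are handled as kernels [nat \<Rightarrow> nat \<Rightarrow> complex] and functions
  [nat \<Rightarrow> complex] restricted to [{..<n}], so that compactness of the unit sphere can be taken
  in the product topology.\<close>

definition quad_form :: "nat \<Rightarrow> (nat \<Rightarrow> nat \<Rightarrow> complex) \<Rightarrow> (nat \<Rightarrow> complex) \<Rightarrow> complex" where
  "quad_form n h f = (\<Sum>a<n. \<Sum>b<n. cnj (f a) * h a b * f b)"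

definition sq_norm :: "nat \<Rightarrow> (nat \<Rightarrow> complex) \<Rightarrow> real" where
  "sq_norm n f = (\<Sum>a<n. (cmod (f a))^2)"

definition hermitian_kernel :: "nat \<Rightarrow> (nat \<Rightarrow> nat \<Rightarrow> complex) \<Rightarrow> bool" where
  "hermitian_kernel n h \<longleftrightarrow> (\<forall>a<n. \<forall>b<n. h a b = cnj (h b a))"

definition kernel_apply :: "nat \<Rightarrow> (nat \<Rightarrow> nat \<Rightarrow> complex) \<Rightarrow> (nat \<Rightarrow> complex) \<Rightarrow> nat \<Rightarrow> complex" where
  "kernel_apply n h f a = (\<Sum>b<n. h a b * f b)"

definition spectrum_lower_bound :: "nat \<Rightarrow> (nat \<Rightarrow> nat \<Rightarrow> complex) \<Rightarrow> real \<Rightarrow> bool" where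
  "spectrum_lower_bound n h E \<longleftrightarrow>
     (\<forall>l g. (\<forall>a<n. kernel_apply n h g a = l * g a) \<longrightarrow> (\<exists>a<n. g a \<noteq> 0) \<longrightarrow> E \<le> Re l)"

definition kernel_ground_state :: "nat \<Rightarrow> (nat \<Rightarrow> nat \<Rightarrow> complex) \<Rightarrow> real \<Rightarrow> (nat \<Rightarrow> complex) \<Rightarrow> bool" where
  "kernel_ground_state n h E f \<longleftrightarrow> sq_norm n f = 1 \<and>
     (\<forall>a<n. kernel_apply n h f a = of_real E * f a) \<and> spectrum_lower_bound n h E"

lemma spectrum_lower_boundD:
  "spectrum_lower_bound n h E \<Longrightarrow> \<forall>a<n. kernel_apply n h g a = l * g a \<Longrightarrow> \<exists>a<n. g a \<noteq> 0
    \<Longrightarrow> E \<le> Re l"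
  unfolding spectrum_lower_bound_def by blast

lemma cnj_mult_self: "cnj z * z = complex_of_real ((cmod z)^2)"
  by (subst complex_norm_square) (rule mult.commute)

lemma sq_norm_nonneg: "sq_norm n f \<ge> 0"
  unfolding sq_norm_def by (simp add: sum_nonneg)

lemma sq_norm_eq_0_iff: "sq_norm n f = 0 \<longleftrightarrow> (\<forall>a<n. f a = 0)"
  unfolding sq_norm_def by (subst sum_nonneg_eq_0_iff) auto

lemma of_real_sq_norm: "of_real (sq_norm n f) = (\<Sum>a<n. cnj (f a) * f a)"
  unfolding sq_norm_def by (simp add: cnj_mult_self)

lemma sq_norm_scale: "sq_norm n (\<lambda>a. of_real c * f a) = c^2 * sq_norm n f"
  unfolding sq_norm_def sum_distrib_left
  by (intro sum.cong refl) (simp add: norm_mult power_mult_distrib)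

lemma quad_form_cong: "(\<And>a. a < n \<Longrightarrow> f a = g a) \<Longrightarrow> quad_form n h f = quad_form n h g"
  unfolding quad_form_def by (intro sum.cong refl) auto

lemma quad_form_scale: "quad_form n h (\<lambda>a. of_real c * f a) = of_real (c^2) * quad_form n h f"
  unfolding quad_form_def sum_distrib_left
  by (intro sum.cong refl) (simp add: power2_eq_square algebra_simps)

lemma quad_form_kernel_apply: "quad_form n h f = (\<Sum>a<n. cnj (f a) * kernel_apply n h f a)"
  unfolding quad_form_def kernel_apply_def by (simp add: sum_distrib_left mult.assoc)

lemma quad_form_diff: "quad_form n (\<lambda>a b. h1 a b - h2 a b) f = quad_form n h1 f - quad_form n h2 f"
  unfolding quad_form_def by (simp add: algebra_simps sum_subtractf)

lemma kernel_apply_diff: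
  "kernel_apply n (\<lambda>a b. h1 a b - h2 a b) f a = kernel_apply n h1 f a - kernel_apply n h2 f a"
  unfolding kernel_apply_def by (simp add: algebra_simps sum_subtractf)

lemma quad_form_diagonal:
  assumes "\<And>a b. a < n \<Longrightarrow> b < n \<Longrightarrow> h a b = (if a = b then of_real (d b) else 0)"
  shows "quad_form n h f = of_real (\<Sum>a<n. d a * (cmod (f a))^2)"
proof -
  have "quad_form n h f = (\<Sum>a<n. \<Sum>b<n. if b = a then of_real (d a) * (cnj (f a) * f a) else 0)"
    unfolding quad_form_def using assms by (intro sum.cong refl) auto
  also have "\<dots> = (\<Sum>a<n. of_real (d a * (cmod (f a))^2))"
    by (simp add: cnj_mult_self)
  finally show ?thesis by simp
qed

lemma kernel_apply_diagonal:
  assumes "\<And>a b. a < n \<Longrightarrow> b < n \<Longrightarrow> h a b = (if a = b then of_real (d b) else 0)" and "a < n"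
  shows "kernel_apply n h f a = of_real (d a) * f a"
proof -
  have "kernel_apply n h f a = (\<Sum>b<n. if a = b then of_real (d a) * f a else 0)"
    unfolding kernel_apply_def using assms by (intro sum.cong refl) auto
  then show ?thesis using \<open>a < n\<close> by simp
qed

lemma quad_form_eigen:
  assumes "\<forall>a<n. kernel_apply n h f a = of_real E * f a"
  shows "quad_form n h f = of_real (E * sq_norm n f)"
  unfolding quad_form_kernel_apply using assms
  by (simp add: of_real_sq_norm sum_distrib_left mult.left_commute)

lemma hermitian_kernel_swap:
  assumes "hermitian_kernel n h"
  shows "(\<Sum>a<n. \<Sum>b<n. cnj (x a) * h a b * y b) = cnj (\<Sum>a<n. \<Sum>b<n. cnj (y a) * h a b * x b)"
proof -
  have "cnj (\<Sum>a<n. \<Sum>b<n. cnj (y a) * h a b * x b) = (\<Sum>a<n. \<Sum>b<n. y a * cnj (h a b) * cnj (x b))"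
    by simp
  also have "\<dots> = (\<Sum>a<n. \<Sum>b<n. y a * h b a * cnj (x b))"
    using assms unfolding hermitian_kernel_def by (intro sum.cong refl) (metis complex_cnj_cnj lessThan_iff)
  also have "\<dots> = (\<Sum>b<n. \<Sum>a<n. y a * h b a * cnj (x b))" by (rule sum.swap)
  also have "\<dots> = (\<Sum>a<n. \<Sum>b<n. cnj (x a) * h a b * y b)"
    by (simp add: mult.commute mult.left_commute)
  finally show ?thesis by simp
qed

text \<open>A positive semidefinite Hermitian form vanishes on [x] only if [h x = 0]: otherwise
  moving from [x] along [t * h x] for a small [t < 0] makes the form negative.\<close>
lemma psd_kernel_apply_eq_0:
  assumes herm: "hermitian_kernel n h" and psd: "\<And>f. Re (quad_form n h f) \<ge> 0"
    and x0: "Re (quad_form n h x) = 0"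
  shows "\<forall>a<n. kernel_apply n h x a = 0"
proof -
  define w where "w = kernel_apply n h x"
  define s where "s = sq_norm n w"
  define c where "c = Re (quad_form n h w)"
  have c0: "c \<ge> 0" using psd c_def by auto
  have "(\<Sum>a<n. \<Sum>b<n. cnj (w a) * h a b * x b) = (\<Sum>a<n. cnj (w a) * w a)"
    unfolding w_def kernel_apply_def by (simp add: sum_distrib_left mult.assoc)
  then have cross: "(\<Sum>a<n. \<Sum>b<n. cnj (w a) * h a b * x b) = of_real s"
    unfolding s_def of_real_sq_norm .
  have cross': "(\<Sum>a<n. \<Sum>b<n. cnj (x a) * h a b * w b) = of_real s"
    using hermitian_kernel_swap[OF herm, of x w] cross by simp
  have expand: "Re (quad_form n h (\<lambda>a. x a + of_real t * w a)) = 2 * t * s + t^2 * c" for t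
  proof -
    have "quad_form n h (\<lambda>a. x a + of_real t * w a) = quad_form n h x
       + of_real t * (\<Sum>a<n. \<Sum>b<n. cnj (x a) * h a b * w b)
       + of_real t * (\<Sum>a<n. \<Sum>b<n. cnj (w a) * h a b * x b) + of_real (t^2) * quad_form n h w"
      unfolding quad_form_def by (simp add: algebra_simps sum.distrib sum_distrib_left power2_eq_square)
    then show ?thesis unfolding cross cross' using x0 c_def by simp
  qed
  define t where "t = - s / (c + 1)"
  have "0 \<le> (c + 1)^2 * (2 * t * s + t^2 * c)"
    using psd[of "\<lambda>a. x a + of_real t * w a"] expand by simp
  also have "\<dots> = 2 * s * (t * (c + 1)) * (c + 1) + (t * (c + 1))^2 * c"
    by (simp add: algebra_simps power2_eq_square)
  also have "t * (c + 1) = - s"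
    unfolding t_def using c0 by simp
  finally have "0 \<le> - (s^2 * (c + 2))"
    by (simp add: algebra_simps power2_eq_square)
  moreover have "0 \<le> s^2 * (c + 2)" using c0 by simp
  ultimately have "s^2 * (c + 2) = 0" by linarith
  then have "s = 0" using c0 by simp
  then show ?thesis using sq_norm_eq_0_iff s_def w_def by auto
qed

lemma hermitian_kernel_shift:
  assumes "hermitian_kernel n h"
  shows "hermitian_kernel n (\<lambda>a b. h a b - (if a = b then of_real c else 0))"
  unfolding hermitian_kernel_def
proof (intro allI impI)
  fix a b assume "a < n" "b < n"
  then have "h a b = cnj (h b a)" using assms unfolding hermitian_kernel_def by blast
  then show "h a b - (if a = b then of_real c else 0) = cnj (h b a - (if b = a then of_real c else 0))"
    by simp
qed

lemma rayleigh_minimizer_eigen: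
  assumes herm: "hermitian_kernel n h"
    and lower: "\<And>g. l * sq_norm n g \<le> Re (quad_form n h g)"
    and eq: "Re (quad_form n h f) = l * sq_norm n f"
  shows "\<forall>a<n. kernel_apply n h f a = of_real l * f a"
proof -
  define d where "d = (\<lambda>a b::nat. if a = b then complex_of_real l else 0)"
  define h' where "h' = (\<lambda>a b. h a b - d a b)"
  have "quad_form n d g = of_real (\<Sum>a<n. l * (cmod (g a))^2)" for g
    by (rule quad_form_diagonal) (simp add: d_def)
  then have quad: "quad_form n h' g = quad_form n h g - of_real (l * sq_norm n g)" for g
    unfolding h'_def quad_form_diff by (simp add: sq_norm_def sum_distrib_left)
  have "\<forall>a<n. kernel_apply n h' f a = 0"
  proof (rule psd_kernel_apply_eq_0)
    show "hermitian_kernel n h'" unfolding h'_def d_def by (rule hermitian_kernel_shift[OF herm])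
    show "Re (quad_form n h' g) \<ge> 0" for g using lower[of g] by (simp add: quad)
    show "Re (quad_form n h' f) = 0" using eq by (simp add: quad)
  qed
  moreover have "kernel_apply n d f a = of_real l * f a" if "a < n" for a
    using kernel_apply_diagonal[of n d "\<lambda>_. l", OF _ that] by (simp add: d_def)
  ultimately show ?thesis unfolding h'_def kernel_apply_diff by simp
qed

lemma compact_cball_complex: "compact (cball (0::complex) 1)"
proof -
  have eq: "cball (0::complex) 1 = (\<lambda>p. Complex (fst p) (snd p)) ` cball (0::real\<times>real) 1"
  proof (rule subset_antisym; rule subsetI)
    fix z :: complex assume "z \<in> cball 0 1"
    then have "z = Complex (fst (Re z, Im z)) (snd (Re z, Im z)) \<and> (Re z, Im z) \<in> cball (0::real\<times>real) 1"
      by (simp add: dist_Pair_Pair dist_real_def cmod_def norm_Pair)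
    then show "z \<in> (\<lambda>p. Complex (fst p) (snd p)) ` cball (0::real\<times>real) 1" by blast
  next
    fix z :: complex assume "z \<in> (\<lambda>p. Complex (fst p) (snd p)) ` cball (0::real\<times>real) 1"
    then obtain x y where "z = Complex x y" "(x, y) \<in> cball (0::real\<times>real) 1" by auto
    then show "z \<in> cball 0 1"
      by (simp add: dist_Pair_Pair dist_real_def cmod_def zero_prod_def norm_Pair)
  qed
  have "continuous_on UNIV (\<lambda>p::real\<times>real. Complex (fst p) (snd p))"
  proof -
    have "(\<lambda>p::real\<times>real. Complex (fst p) (snd p)) = (\<lambda>p. of_real (fst p) + \<i> * of_real (snd p))"
      by (auto simp: complex_eq_iff)
    moreover have "continuous_on UNIV (\<lambda>p::real\<times>real. of_real (fst p) + \<i> * (of_real (snd p) :: complex))"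
      by (intro continuous_intros)
    ultimately show ?thesis by (simp only:)
  qed
  then show ?thesis unfolding eq
    by (rule compact_continuous_image[OF continuous_on_subset compact_cball]) simp
qed

lemma compact_unit_polydisc:
  "compact {x::nat \<Rightarrow> complex. \<forall>i. x i \<in> (if i < n then cball 0 1 else {0})}"
proof -
  let ?S = "\<lambda>i::nat. if i < n then cball 0 1 else {0::complex}"
  have "compactin (product_topology (\<lambda>i. euclidean) UNIV) (PiE UNIV ?S)"
    by (subst compactin_PiE) (auto simp: compact_cball_complex)
  then show ?thesis by (simp add: euclidean_product_topology PiE_UNIV_domain Pi_def)
qed

text \<open>The minimum of the form on the (compact) unit sphere of [\<complex>^n] is a lower bound of the
  Rayleigh quotient.\<close>
lemma rayleigh_minimum_exists:
  assumes "n > 0"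
  shows "\<exists>\<phi>. sq_norm n \<phi> = 1 \<and> (\<forall>f. Re (quad_form n h \<phi>) * sq_norm n f \<le> Re (quad_form n h f))"
proof -
  define B where "B = {x::nat \<Rightarrow> complex. \<forall>i. x i \<in> (if i < n then cball 0 1 else {0})}"
  define K where "K = B \<inter> {x. sq_norm n x = 1}"
  have cont_norm: "continuous_on UNIV (\<lambda>x::nat \<Rightarrow> complex. sq_norm n x)"
    unfolding sq_norm_def by (intro continuous_intros continuous_on_product_coordinates)
  have cont_quad: "continuous_on UNIV (\<lambda>x. Re (quad_form n h x))"
    unfolding quad_form_def by (intro continuous_intros continuous_on_product_coordinates)
  have "compact K"
    unfolding K_def B_def
    by (intro compact_Int_closed compact_unit_polydisc closed_Collect_eq[OF cont_norm continuous_on_const])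
  define e0 where "e0 = (\<lambda>i::nat. if i = 0 then (1::complex) else 0)"
  have "sq_norm n e0 = (\<Sum>a<n. if a = 0 then 1 else 0)"
    unfolding sq_norm_def by (intro sum.cong refl) (auto simp: e0_def)
  then have "sq_norm n e0 = 1" using assms by simp
  then have "e0 \<in> K" unfolding K_def B_def e0_def using assms by auto
  then have "K \<noteq> {}" by auto
  from continuous_attains_inf[OF \<open>compact K\<close> this continuous_on_subset[OF cont_quad subset_UNIV]]
  obtain \<phi> where \<phi>K: "\<phi> \<in> K" and \<phi>min: "\<And>y. y \<in> K \<Longrightarrow> Re (quad_form n h \<phi>) \<le> Re (quad_form n h y)"
    by metis
  have "Re (quad_form n h \<phi>) * sq_norm n f \<le> Re (quad_form n h f)" for f
  proof (cases "sq_norm n f = 0")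
    case True
    then have "quad_form n h f = 0" unfolding sq_norm_eq_0_iff quad_form_def by simp
    with True show ?thesis by simp
  next
    case False
    define s where "s = sq_norm n f"
    have s0: "s > 0" using False sq_norm_nonneg[of n f] s_def by auto
    define g where "g = (\<lambda>a. if a < n then of_real (1 / sqrt s) * f a else 0)"
    have "sq_norm n g = sq_norm n (\<lambda>a. of_real (1 / sqrt s) * f a)"
      unfolding sq_norm_def g_def by (intro sum.cong refl) auto
    then have g1: "sq_norm n g = 1"
      unfolding sq_norm_scale using s0 s_def by (simp add: power_divide)
    have "g \<in> B" unfolding B_def
    proof (intro CollectI allI)
      fix i
      have "(cmod (g i))^2 \<le> sq_norm n g" if "i < n"
        unfolding sq_norm_def using that by (intro member_le_sum) auto
      then have "cmod (g i) \<le> 1" if "i < n" using that g1 by (simp add: power_le_one_iff)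
      then show "g i \<in> (if i < n then cball 0 1 else {0})" by (simp add: g_def dist_norm)
    qed
    then have "Re (quad_form n h \<phi>) \<le> Re (quad_form n h g)" using \<phi>min g1 K_def by auto
    also have "quad_form n h g = quad_form n h (\<lambda>a. of_real (1 / sqrt s) * f a)"
      by (rule quad_form_cong) (simp add: g_def)
    also have "\<dots> = of_real (1 / s) * quad_form n h f"
      unfolding quad_form_scale using s0 by (simp add: power_divide)
    finally show ?thesis using s0 unfolding s_def by (simp add: pos_le_divide_eq)
  qed
  moreover have "sq_norm n \<phi> = 1" using \<phi>K K_def by auto
  ultimately show ?thesis by blast
qed

lemma quad_form_ge_ground_energy:
  assumes herm: "hermitian_kernel n h" and bound: "spectrum_lower_bound n h E"
  shows "E * sq_norm n f \<le> Re (quad_form n h f)"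
proof (cases "n = 0")
  case True
  then show ?thesis by (simp add: sq_norm_def quad_form_def)
next
  case False
  then have "n > 0" by simp
  from rayleigh_minimum_exists[OF this, of h] obtain \<phi> where \<phi>1: "sq_norm n \<phi> = 1"
    and min: "\<And>f. Re (quad_form n h \<phi>) * sq_norm n f \<le> Re (quad_form n h f)"
    by blast
  define l where "l = Re (quad_form n h \<phi>)"
  have "\<forall>a<n. kernel_apply n h \<phi> a = of_real l * \<phi> a"
  proof (rule rayleigh_minimizer_eigen[OF herm])
    show "l * sq_norm n g \<le> Re (quad_form n h g)" for g unfolding l_def by (rule min)
    show "Re (quad_form n h \<phi>) = l * sq_norm n \<phi>" unfolding l_def \<phi>1 by simp
  qed
  moreover have "\<exists>a<n. \<phi> a \<noteq> 0"
  proof (rule ccontr)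
    assume "\<not> (\<exists>a<n. \<phi> a \<noteq> 0)"
    then have "sq_norm n \<phi> = 0" by (simp add: sq_norm_eq_0_iff)
    with \<phi>1 show False by simp
  qed
  ultimately have "E \<le> Re (complex_of_real l)"
    by (rule spectrum_lower_boundD[OF bound])
  then have "E \<le> l" by simp
  then have "E * sq_norm n f \<le> l * sq_norm n f" by (rule mult_right_mono) (rule sq_norm_nonneg)
  then show ?thesis using min[of f] unfolding l_def by linarith
qed

lemma ground_energy_attained_imp_eigen:
  assumes herm: "hermitian_kernel n h" and bound: "spectrum_lower_bound n h E"
    and eq: "Re (quad_form n h f) = E * sq_norm n f"
  shows "\<forall>a<n. kernel_apply n h f a = of_real E * f a"
  using rayleigh_minimizer_eigen[OF herm quad_form_ge_ground_energy[OF herm bound] eq] .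

lemma ground_state_diagonal_perturbation:
  assumes herm1: "hermitian_kernel n h1" and herm2: "hermitian_kernel n h2"
    and diag: "\<And>a b. a < n \<Longrightarrow> b < n \<Longrightarrow> h1 a b - h2 a b = (if a = b then of_real (d b) else 0)"
    and gs1: "kernel_ground_state n h1 E1 f1" and gs2: "kernel_ground_state n h2 E2 f2"
    and same: "(\<Sum>a<n. d a * (cmod (f1 a))^2) = (\<Sum>a<n. d a * (cmod (f2 a))^2)"
  shows "\<forall>a<n. of_real (d a) * f2 a = of_real (E1 - E2) * f2 a"
proof -
  define V where "V = (\<Sum>a<n. d a * (cmod (f2 a))^2)"
  have split: "quad_form n h1 f = quad_form n h2 f + of_real (\<Sum>a<n. d a * (cmod (f a))^2)" for f
    using quad_form_diff[of n h1 h2 f] quad_form_diagonal[of n "\<lambda>a b. h1 a b - h2 a b" d f] diag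
    by simp
  have norms: "sq_norm n f1 = 1" "sq_norm n f2 = 1"
    and bounds: "spectrum_lower_bound n h1 E1" "spectrum_lower_bound n h2 E2"
    and eigen2: "\<forall>a<n. kernel_apply n h2 f2 a = of_real E2 * f2 a"
    using gs1 gs2 unfolding kernel_ground_state_def by auto
  have energies: "Re (quad_form n h1 f1) = E1" "Re (quad_form n h2 f2) = E2"
    using gs1 gs2 quad_form_eigen[of n h1 f1 E1] quad_form_eigen[of n h2 f2 E2]
    unfolding kernel_ground_state_def by auto
  have "E1 \<le> Re (quad_form n h1 f2)"
    using quad_form_ge_ground_energy[OF herm1 bounds(1), of f2] norms by simp
  moreover have "Re (quad_form n h1 f2) = E2 + V"
    using split[of f2] energies V_def by simp
  moreover have "E2 \<le> Re (quad_form n h2 f1)"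
    using quad_form_ge_ground_energy[OF herm2 bounds(2), of f1] norms by simp
  moreover have "Re (quad_form n h2 f1) = E1 - V"
    using split[of f1] energies same V_def by simp
  ultimately have "Re (quad_form n h1 f2) = E1 * sq_norm n f2"
    using norms by simp
  then have eigen1: "\<forall>a<n. kernel_apply n h1 f2 a = of_real E1 * f2 a"
    by (rule ground_energy_attained_imp_eigen[OF herm1 bounds(1)])
  show ?thesis
  proof (intro allI impI)
    fix a assume a: "a < n"
    have "of_real (d a) * f2 a = kernel_apply n (\<lambda>a b. h1 a b - h2 a b) f2 a"
      using kernel_apply_diagonal[of n _ d, OF diag a] by simp
    also have "\<dots> = of_real (E1 - E2) * f2 a"
      unfolding kernel_apply_diff using eigen1 eigen2 a by (simp add: algebra_simps)
    finally show "of_real (d a) * f2 a = of_real (E1 - E2) * f2 a" .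
  qed
qed

section \<open>The hypercube\<close>

lemma flip_bit_flip_bit [simp]: "flip_bit k (flip_bit k (b::nat)) = b"
  by (rule bit_eqI) (auto simp: bit_flip_bit_iff)

lemma flip_bit_neq: "flip_bit k (b::nat) \<noteq> b"
proof
  assume "flip_bit k b = b"
  then have "bit (flip_bit k b) k = bit b k" by simp
  then show False by (simp add: bit_flip_bit_iff)
qed

lemma flip_bit_less_power2:
  assumes "k < N" "(b::nat) < 2^N"
  shows "flip_bit k b < 2^N"
proof -
  have "take_bit N b = b" using assms(2) by (simp add: take_bit_nat_eq_self_iff)
  then have "take_bit N (flip_bit k b) = flip_bit k b"
    using assms(1) by (simp add: take_bit_flip_bit_eq)
  then show ?thesis by (simp add: take_bit_nat_eq_self_iff)
qed

lemma not_bit_ge_length: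
  assumes "(b::nat) < 2^N" "N \<le> k"
  shows "\<not> bit b k"
proof -
  have "take_bit N b = b" using assms(1) by (simp add: take_bit_nat_eq_self_iff)
  then show ?thesis using assms(2) by (metis bit_take_bit_iff not_le)
qed

lemma hypercube_induct:
  assumes "P b0" and "b0 < (2::nat)^N"
    and step: "\<And>b k. b < 2^N \<Longrightarrow> k < N \<Longrightarrow> P b \<Longrightarrow> P (flip_bit k b)"
  shows "c < 2^N \<Longrightarrow> P c"
proof (induction "card {k. k < N \<and> bit c k \<noteq> bit b0 k}" arbitrary: c rule: less_induct)
  case less
  define D where "D = {k. k < N \<and> bit c k \<noteq> bit b0 k}"
  show ?case
  proof (cases "D = {}")
    case True
    have "c = b0"
    proof (rule bit_eqI)
      fix k show "bit c k = bit b0 k"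
        using True not_bit_ge_length[OF less.prems] not_bit_ge_length[OF assms(2)]
        unfolding D_def by (cases "k < N") auto
    qed
    then show ?thesis using assms(1) by simp
  next
    case False
    then obtain k where k: "k \<in> D" by auto
    define c' where "c' = flip_bit k c"
    have c': "c' < 2^N" unfolding c'_def using flip_bit_less_power2 k less.prems D_def by auto
    have "{j. j < N \<and> bit c' j \<noteq> bit b0 j} = D - {k}"
      unfolding c'_def D_def using k D_def by (auto simp: bit_flip_bit_iff)
    moreover have "card (D - {k}) < card D"
      using k by (intro card_Diff1_less) (auto simp: D_def)
    ultimately have "P c'" using less.hyps[OF _ c'] D_def by simp
    then have "P (flip_bit k c')" using step[OF c'] k D_def by simp
    then show ?thesis unfolding c'_def by simp
  qed
qed

section \<open>Matrix elements of the Hamiltonian\<close>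

text \<open>[spin_sign N i b] is the [\<sigma>z] eigenvalue of site [i] on basis state [b], and
  [flip_count N a b] the matrix element of [\<Sum>i. \<sigma>x_i].\<close>

definition spin_sign :: "nat \<Rightarrow> nat \<Rightarrow> nat \<Rightarrow> real" where
  "spin_sign N i b = (if bit b (N - i) then -1 else 1)"

definition flip_count :: "nat \<Rightarrow> nat \<Rightarrow> nat \<Rightarrow> real" where
  "flip_count N a b = (\<Sum>i\<in>{1..<N+1}. if a = flip_bit (N - i) b then 1 else 0)"

definition ising_energy :: "nat \<Rightarrow> (nat \<Rightarrow> nat \<Rightarrow> real) \<Rightarrow> nat \<Rightarrow> real" where
  "ising_energy N J b = (\<Sum>i\<in>{1..<N+1}. \<Sum>j\<in>{i+1..<N+1}. J i j * (spin_sign N i b * spin_sign N j b))"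

definition spin_parity :: "nat \<Rightarrow> nat \<Rightarrow> real" where
  "spin_parity N b = (\<Prod>i\<in>{1..<N+1}. spin_sign N i b)"

lemma spin_sign_0: "spin_sign N i 0 = 1"
  unfolding spin_sign_def by simp

lemma spin_sign_mult_self: "spin_sign N i b * spin_sign N i b = 1"
  unfolding spin_sign_def by simp

lemma spin_sign_flip_bit:
  assumes "i \<in> {1..<N+1}" "k \<in> {1..<N+1}"
  shows "spin_sign N i (flip_bit (N - k) b) = (if i = k then - spin_sign N i b else spin_sign N i b)"
proof -
  have "N - k = N - i \<longleftrightarrow> i = k" using assms by auto
  then show ?thesis unfolding spin_sign_def by (auto simp: bit_flip_bit_iff)
qed

lemma spin_parity_mult_self: "spin_parity N b * spin_parity N b = 1"
  unfolding spin_parity_def prod.distrib[symmetric] spin_sign_mult_self by simp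

lemma spin_parity_flip_bit:
  assumes k: "k \<in> {1..<N+1}"
  shows "spin_parity N (flip_bit (N - k) b) = - spin_parity N b"
proof -
  have "spin_parity N (flip_bit (N - k) b)
      = (\<Prod>i\<in>{1..<N+1}. if i = k then - spin_sign N i b else spin_sign N i b)"
    unfolding spin_parity_def by (intro prod.cong refl) (use spin_sign_flip_bit k in auto)
  also have "\<dots> = - spin_sign N k b * (\<Prod>i\<in>{1..<N+1} - {k}. spin_sign N i b)"
    using k by (subst prod.remove[of _ k]) (auto intro!: prod.cong)
  also have "\<dots> = - spin_parity N b"
    unfolding spin_parity_def using k by (subst (2) prod.remove[of _ k]) auto
  finally show ?thesis .
qed

lemma flip_count_nonneg: "flip_count N a b \<ge> 0"
  unfolding flip_count_def by (intro sum_nonneg) auto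

lemma flip_count_sym: "flip_count N a b = flip_count N b a"
  unfolding flip_count_def by (intro sum.cong refl) (metis flip_bit_flip_bit)

lemma flip_count_same: "flip_count N a a = 0"
proof -
  have "a \<noteq> flip_bit k a" for k using flip_bit_neq[of k a] by simp
  then show ?thesis unfolding flip_count_def by simp
qed

lemma flip_count_flip_bit:
  assumes "k < N"
  shows "flip_count N b (flip_bit k b) \<ge> 1"
proof -
  have "N - k \<in> {1..<N+1}" using assms by auto
  then have "(if b = flip_bit (N - (N - k)) (flip_bit k b) then 1 else 0::real)
      \<le> flip_count N b (flip_bit k b)"
    unfolding flip_count_def by (rule member_le_sum) auto
  then show ?thesis using assms by simp
qed

lemma spin_parity_opposite:
  assumes "flip_count N a b \<noteq> 0"
  shows "spin_parity N a = - spin_parity N b"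
proof -
  have "\<exists>i\<in>{1..<N+1}. a = flip_bit (N - i) b"
  proof (rule ccontr)
    assume "\<not> ?thesis"
    then have "flip_count N a b = 0" unfolding flip_count_def by (intro sum.neutral) auto
    with assms show False by simp
  qed
  then show ?thesis using spin_parity_flip_bit by blast
qed

lemma msum_carrier: "\<forall>A\<in>set As. A \<in> carrier_mat n n \<Longrightarrow> msum n As \<in> carrier_mat n n"
  by (induction As) (auto simp: msum_def)

lemma index_msum:
  "\<forall>A\<in>set As. A \<in> carrier_mat n n \<Longrightarrow> a < n \<Longrightarrow> b < n \<Longrightarrow>
    msum n As $$ (a, b) = (\<Sum>A\<leftarrow>As. A $$ (a, b))"
proof (induction As)
  case (Cons A As)
  then have "msum n As \<in> carrier_mat n n" by (intro msum_carrier) simp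
  with Cons show ?case by (simp add: msum_def)
qed (simp add: msum_def)

lemma sigma_x_carrier: "sigma_x N i \<in> carrier_mat (2^N) (2^N)"
  by (simp add: sigma_x_def)

lemma sigma_z_carrier: "sigma_z N i \<in> carrier_mat (2^N) (2^N)"
  by (simp add: sigma_z_def)

lemma sigma_zz_carrier: "sigma_z N i * sigma_z N j \<in> carrier_mat (2^N) (2^N)"
  using mult_carrier_mat[OF sigma_z_carrier sigma_z_carrier] .

lemma sigma_dims [simp]:
  "dim_row (sigma_x N i) = 2^N" "dim_col (sigma_x N i) = 2^N"
  "dim_row (sigma_z N i) = 2^N" "dim_col (sigma_z N i) = 2^N"
  by (simp_all add: sigma_x_def sigma_z_def)

lemma index_sigma_x:
  "a < 2^N \<Longrightarrow> b < 2^N \<Longrightarrow> sigma_x N i $$ (a, b) = (if a = flip_bit (N - i) b then 1 else 0)"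
  by (simp add: sigma_x_def site_bit_def)

lemma index_sigma_z:
  "a < 2^N \<Longrightarrow> b < 2^N \<Longrightarrow> sigma_z N i $$ (a, b) = (if a = b then of_real (spin_sign N i b) else 0)"
  by (simp add: sigma_z_def site_bit_def spin_sign_def)

lemma index_sigma_zz:
  assumes a: "a < 2^N" and b: "b < 2^N"
  shows "(sigma_z N i * sigma_z N j) $$ (a, b)
    = (if a = b then of_real (spin_sign N i b * spin_sign N j b) else 0)"
proof -
  have "(sigma_z N i * sigma_z N j) $$ (a, b) = (\<Sum>k<2^N. sigma_z N i $$ (a, k) * sigma_z N j $$ (k, b))"
    using a b sigma_z_carrier[of N i] sigma_z_carrier[of N j]
    by (auto simp: scalar_prod_def atLeast0LessThan intro!: sum.cong)
  also have "\<dots> = (\<Sum>k<2^N. if k = a then (if a = b then of_real (spin_sign N i b * spin_sign N j b) else 0) else 0)"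
    using a b by (intro sum.cong refl) (auto simp: index_sigma_z)
  also have "\<dots> = (if a = b then of_real (spin_sign N i b * spin_sign N j b) else 0)"
    using a by simp
  finally show ?thesis .
qed

lemma sum_list_concat_map:
  "(\<Sum>x\<leftarrow>concat (map (\<lambda>i. map (g i) (ys i)) xs). f x) = (\<Sum>i\<leftarrow>xs. \<Sum>j\<leftarrow>ys i. f (g i j))"
  by (induction xs) (auto simp: o_def)

lemma index_transverse_field:
  assumes "a < 2^N" "b < 2^N"
  shows "msum (2^N) (map (\<lambda>i. complex_of_real \<Omega> \<cdot>\<^sub>m sigma_x N i) [1..<N+1]) $$ (a, b)
    = of_real (\<Omega> * flip_count N a b)"
proof -
  have "msum (2^N) (map (\<lambda>i. complex_of_real \<Omega> \<cdot>\<^sub>m sigma_x N i) [1..<N+1]) $$ (a, b)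
      = (\<Sum>i\<in>{1..<N+1}. of_real \<Omega> * sigma_x N i $$ (a, b))"
    using assms sigma_x_carrier
    by (simp add: index_msum interv_sum_list_conv_sum_set_nat o_def del: upt_Suc sum.op_ivl_Suc)
  also have "\<dots> = (\<Sum>i\<in>{1..<N+1}. of_real (\<Omega> * (if a = flip_bit (N - i) b then 1 else 0)))"
    using assms by (intro sum.cong refl) (simp add: index_sigma_x)
  also have "\<dots> = of_real (\<Omega> * flip_count N a b)"
    unfolding flip_count_def sum_distrib_left of_real_sum ..
  finally show ?thesis .
qed

lemma index_longitudinal_field:
  assumes "a < 2^N" "b < 2^N"
  shows "msum (2^N) (map (\<lambda>i. complex_of_real \<delta> \<cdot>\<^sub>m sigma_z N i) [1..<N+1]) $$ (a, b)
    = of_real (if a = b then \<delta> * (\<Sum>i\<in>{1..<N+1}. spin_sign N i b) else 0)"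
proof -
  have "msum (2^N) (map (\<lambda>i. complex_of_real \<delta> \<cdot>\<^sub>m sigma_z N i) [1..<N+1]) $$ (a, b)
      = (\<Sum>i\<in>{1..<N+1}. of_real \<delta> * sigma_z N i $$ (a, b))"
    using assms sigma_z_carrier
    by (simp add: index_msum interv_sum_list_conv_sum_set_nat o_def del: upt_Suc sum.op_ivl_Suc)
  also have "\<dots> = of_real (if a = b then \<delta> * (\<Sum>i\<in>{1..<N+1}. spin_sign N i b) else 0)"
    using assms by (simp add: index_sigma_z sum_distrib_left del: sum.op_ivl_Suc)
  finally show ?thesis .
qed

lemma index_ising_coupling:
  assumes "a < 2^N" "b < 2^N"
  shows "msum (2^N) (concat (map (\<lambda>i. map (\<lambda>j. complex_of_real (J i j) \<cdot>\<^sub>m (sigma_z N i * sigma_z N j))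
      [i+1..<N+1]) [1..<N+1])) $$ (a, b) = of_real (if a = b then ising_energy N J b else 0)"
proof -
  have "msum (2^N) (concat (map (\<lambda>i. map (\<lambda>j. complex_of_real (J i j) \<cdot>\<^sub>m (sigma_z N i * sigma_z N j))
      [i+1..<N+1]) [1..<N+1])) $$ (a, b)
      = (\<Sum>i\<in>{1..<N+1}. \<Sum>j\<in>{i+1..<N+1}. of_real (J i j) * (sigma_z N i * sigma_z N j) $$ (a, b))"
    using assms sigma_zz_carrier
    by (simp add: index_msum sum_list_concat_map interv_sum_list_conv_sum_set_nat
        del: upt_Suc sum.op_ivl_Suc index_mult_mat(1))
  also have "\<dots> = of_real (if a = b then ising_energy N J b else 0)"
    using assms by (simp add: index_sigma_zz ising_energy_def sum_distrib_left del: index_mult_mat(1) sum.op_ivl_Suc)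
  finally show ?thesis .
qed

lemma hamiltonian_carrier: "hamiltonian N \<Omega> \<delta> J \<in> carrier_mat (2^N) (2^N)"
  unfolding hamiltonian_def
  by (intro add_carrier_mat msum_carrier) (auto simp: sigma_x_carrier sigma_z_carrier sigma_zz_carrier)

lemma index_hamiltonian:
  assumes "a < 2^N" "b < 2^N"
  shows "hamiltonian N \<Omega> \<delta> J $$ (a, b) = of_real (\<Omega> * flip_count N a b +
    (if a = b then \<delta> * (\<Sum>i\<in>{1..<N+1}. spin_sign N i b) + ising_energy N J b else 0))"
proof -
  define X where "X = msum (2^N) (map (\<lambda>i. complex_of_real \<Omega> \<cdot>\<^sub>m sigma_x N i) [1..<N+1])"
  define Z where "Z = msum (2^N) (map (\<lambda>i. complex_of_real \<delta> \<cdot>\<^sub>m sigma_z N i) [1..<N+1])"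
  define C where "C = msum (2^N) (concat (map (\<lambda>i. map (\<lambda>j. complex_of_real (J i j) \<cdot>\<^sub>m
    (sigma_z N i * sigma_z N j)) [i+1..<N+1]) [1..<N+1]))"
  have "X \<in> carrier_mat (2^N) (2^N)" "Z \<in> carrier_mat (2^N) (2^N)" "C \<in> carrier_mat (2^N) (2^N)"
    unfolding X_def Z_def C_def
    by (auto intro!: msum_carrier simp: sigma_x_carrier sigma_z_carrier sigma_zz_carrier)
  then have "hamiltonian N \<Omega> \<delta> J $$ (a, b) = X $$ (a, b) + Z $$ (a, b) + C $$ (a, b)"
    using assms unfolding hamiltonian_def X_def[symmetric] Z_def[symmetric] C_def[symmetric] by simp
  then show ?thesis
    unfolding X_def Z_def C_def index_transverse_field[OF assms] index_longitudinal_field[OF assms]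
      index_ising_coupling[OF assms]
    by simp
qed

lemma hamiltonian_hermitian: "hermitian_kernel (2^N) (\<lambda>a b. hamiltonian N \<Omega> \<delta> J $$ (a, b))"
  unfolding hermitian_kernel_def
proof (intro allI impI)
  fix a b :: nat assume "a < 2^N" "b < 2^N"
  then show "hamiltonian N \<Omega> \<delta> J $$ (a, b) = cnj (hamiltonian N \<Omega> \<delta> J $$ (b, a))"
    unfolding index_hamiltonian[OF \<open>a < 2^N\<close> \<open>b < 2^N\<close>] index_hamiltonian[OF \<open>b < 2^N\<close> \<open>a < 2^N\<close>]
    using flip_count_sym[of N a b] by (cases "a = b") simp_all
qed

lemma ising_energy_diff:
  "ising_energy N J1 b - ising_energy N J2 b = ising_energy N (\<lambda>i j. J1 i j - J2 i j) b"
  unfolding ising_energy_def by (simp only: sum_subtractf[symmetric] left_diff_distrib)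

lemma index_hamiltonian_diff:
  assumes "a < 2^N" "b < 2^N"
  shows "hamiltonian N \<Omega> \<delta> J1 $$ (a, b) - hamiltonian N \<Omega> \<delta> J2 $$ (a, b)
    = (if a = b then of_real (ising_energy N (\<lambda>i j. J1 i j - J2 i j) b) else 0)"
  unfolding index_hamiltonian[OF assms] ising_energy_diff[symmetric] by (cases "a = b") simp_all

lemma ising_energy_const_imp_zero:
  assumes const: "\<forall>a<(2::nat)^N. ising_energy N K a = c" and pq: "1 \<le> p" "p < q" "q \<le> N"
  shows "K p q = 0"
proof -
  define b1 where "b1 = flip_bit (N - p) (0::nat)"
  define b2 where "b2 = flip_bit (N - q) (0::nat)"
  define b3 where "b3 = flip_bit (N - q) b1"
  have lt: "b1 < 2^N" "b2 < 2^N" "b3 < 2^N"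
    unfolding b3_def b1_def b2_def using pq by (auto intro!: flip_bit_less_power2)
  have sites: "p \<in> {1..<N+1}" "q \<in> {1..<N+1}" using pq by auto
  have s1: "spin_sign N i b1 = (if i = p then -1 else 1)" if "i \<in> {1..<N+1}" for i
    using spin_sign_flip_bit[OF that sites(1), of 0] by (simp add: b1_def spin_sign_0)
  have s2: "spin_sign N i b2 = (if i = q then -1 else 1)" if "i \<in> {1..<N+1}" for i
    using spin_sign_flip_bit[OF that sites(2), of 0] by (simp add: b2_def spin_sign_0)
  have s3: "spin_sign N i b3 = (if i = p then -1 else 1) * (if i = q then -1 else 1)"
    if "i \<in> {1..<N+1}" for i
    using spin_sign_flip_bit[OF that sites(2), of b1] s1[OF that] pq by (auto simp: b3_def)
  have "ising_energy N K 0 - ising_energy N K b1 - ising_energy N K b2 + ising_energy N K b3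
      = (\<Sum>i\<in>{1..<N+1}. \<Sum>j\<in>{i+1..<N+1}. K i j * (spin_sign N i 0 * spin_sign N j 0
          - spin_sign N i b1 * spin_sign N j b1 - spin_sign N i b2 * spin_sign N j b2
          + spin_sign N i b3 * spin_sign N j b3))"
    unfolding ising_energy_def by (simp add: sum.distrib sum_subtractf algebra_simps)
  also have "\<dots> = (\<Sum>i\<in>{1..<N+1}. \<Sum>j\<in>{i+1..<N+1}. if i = p \<and> j = q then 4 * K p q else 0)"
  proof (intro sum.cong refl)
    fix i j assume i: "i \<in> {1..<N+1}" and j: "j \<in> {i+1..<N+1}"
    then have j': "j \<in> {1..<N+1}" by auto
    show "K i j * (spin_sign N i 0 * spin_sign N j 0 - spin_sign N i b1 * spin_sign N j b1
        - spin_sign N i b2 * spin_sign N j b2 + spin_sign N i b3 * spin_sign N j b3)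
      = (if i = p \<and> j = q then 4 * K p q else 0)"
      unfolding spin_sign_0 s1[OF i] s2[OF i] s3[OF i] s1[OF j'] s2[OF j'] s3[OF j']
      using i j pq by auto
  qed
  also have "\<dots> = (\<Sum>i\<in>{1..<N+1}. if i = p then 4 * K p q else 0)"
    by (intro sum.cong refl) (use pq in \<open>auto simp: sum.delta'\<close>)
  also have "\<dots> = 4 * K p q" using sites by (simp add: sum.delta')
  finally have "ising_energy N K 0 - ising_energy N K b1 - ising_energy N K b2 + ising_energy N K b3
      = 4 * K p q" .
  moreover have "ising_energy N K 0 - ising_energy N K b1 - ising_energy N K b2 + ising_energy N K b3 = 0"
    using const lt by simp
  ultimately show ?thesis by simp
qed

section \<open>The ground state has no nodes\<close>

text \<open>A diagonal unitary that makes all off-diagonal entries [\<Omega> * flip_count] of the Hamiltonian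
  non-positive: for [\<Omega> > 0] the parity of the spin configuration, which changes under a single flip.\<close>
definition stoquastic_gauge :: "real \<Rightarrow> nat \<Rightarrow> nat \<Rightarrow> real" where
  "stoquastic_gauge \<Omega> N a = (if \<Omega> > 0 then spin_parity N a else 1)"

lemma stoquastic_gauge_mult_self: "stoquastic_gauge \<Omega> N a * stoquastic_gauge \<Omega> N a = 1"
  unfolding stoquastic_gauge_def using spin_parity_mult_self by simp

lemma abs_stoquastic_gauge: "\<bar>stoquastic_gauge \<Omega> N a\<bar> = 1"
proof -
  have "(stoquastic_gauge \<Omega> N a)^2 = 1"
    using stoquastic_gauge_mult_self[of \<Omega> N a] by (simp add: power2_eq_square)
  then show ?thesis by (simp add: abs_square_eq_1)
qed

lemma stoquastic_gauge_hop:
  assumes "flip_count N a b \<noteq> 0"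
  shows "\<Omega> * stoquastic_gauge \<Omega> N a = - \<bar>\<Omega>\<bar> * stoquastic_gauge \<Omega> N b"
proof (cases "\<Omega> > 0")
  case True
  then show ?thesis unfolding stoquastic_gauge_def by (simp add: spin_parity_opposite[OF assms])
next
  case False
  then show ?thesis unfolding stoquastic_gauge_def by simp
qed

definition gauged_modulus :: "real \<Rightarrow> nat \<Rightarrow> (nat \<Rightarrow> complex) \<Rightarrow> nat \<Rightarrow> complex" where
  "gauged_modulus \<Omega> N f a = of_real (stoquastic_gauge \<Omega> N a * cmod (f a))"

lemma sq_norm_gauged_modulus: "sq_norm n (gauged_modulus \<Omega> N f) = sq_norm n f"
  unfolding sq_norm_def gauged_modulus_def norm_of_real by (simp add: abs_mult abs_stoquastic_gauge)

lemma gauged_modulus_quad_form_le: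
  fixes \<Omega> :: real and D :: "nat \<Rightarrow> real"
  assumes hd: "\<And>a b. a < 2^N \<Longrightarrow> b < 2^N \<Longrightarrow>
      h a b = of_real (\<Omega> * flip_count N a b + (if a = b then D b else 0))"
  shows "Re (quad_form (2^N) h (gauged_modulus \<Omega> N f)) \<le> Re (quad_form (2^N) h f)"
proof -
  define \<sigma> where "\<sigma> = stoquastic_gauge \<Omega> N"
  define \<phi> where "\<phi> = gauged_modulus \<Omega> N f"
  have "Re (cnj (\<phi> a) * h a b * \<phi> b) \<le> Re (cnj (f a) * h a b * f b)" if ab: "a < 2^N" "b < 2^N" for a b
  proof (cases "a = b")
    case True
    have "Re (cnj (\<phi> a) * h a b * \<phi> b) = D b * (\<sigma> b * \<sigma> b) * (cmod (f b) * cmod (f b))"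
      unfolding hd[OF ab] \<phi>_def gauged_modulus_def \<sigma>_def using True by (simp add: flip_count_same)
    also have "\<dots> = Re (cnj (f a) * h a b * f b)"
      unfolding \<sigma>_def stoquastic_gauge_mult_self hd[OF ab] using True
      by (simp add: flip_count_same cmod_power2[unfolded power2_eq_square] algebra_simps)
    finally show ?thesis by simp
  next
    case False
    have lhs: "Re (cnj (\<phi> a) * h a b * \<phi> b)
        = (\<Omega> * \<sigma> a) * \<sigma> b * flip_count N a b * (cmod (f a) * cmod (f b))"
      unfolding hd[OF ab] \<phi>_def gauged_modulus_def \<sigma>_def using False by simp
    have rhs: "Re (cnj (f a) * h a b * f b) = \<Omega> * flip_count N a b * Re (cnj (f a) * f b)"
      unfolding hd[OF ab] using False by (simp add: algebra_simps)
    have "\<bar>Re (cnj (f a) * f b)\<bar> \<le> cmod (f a) * cmod (f b)"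
      using abs_Re_le_cmod[of "cnj (f a) * f b"] by (simp add: norm_mult)
    then have "\<bar>\<Omega> * flip_count N a b * Re (cnj (f a) * f b)\<bar>
        \<le> \<bar>\<Omega>\<bar> * flip_count N a b * (cmod (f a) * cmod (f b))"
      using flip_count_nonneg[of N a b] by (simp add: abs_mult mult_left_mono mult.assoc)
    then have "- (\<bar>\<Omega>\<bar> * flip_count N a b * (cmod (f a) * cmod (f b)))
        \<le> \<Omega> * flip_count N a b * Re (cnj (f a) * f b)"
      by linarith
    moreover have "(\<Omega> * \<sigma> a) * \<sigma> b * flip_count N a b = - \<bar>\<Omega>\<bar> * flip_count N a b"
      using stoquastic_gauge_hop[of N a b \<Omega>] stoquastic_gauge_mult_self[of \<Omega> N b]
      unfolding \<sigma>_def by (cases "flip_count N a b = 0") auto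
    ultimately show ?thesis unfolding lhs rhs by simp
  qed
  then show ?thesis
    unfolding quad_form_def Re_sum \<phi>_def[symmetric] by (intro sum_mono) auto
qed

text \<open>In the gauged basis the off-diagonal part of [h] has non-positive entries and connects exactly
  the neighbours of the hypercube, so a vanishing entry of a non-negative eigenvector forces its
  neighbours to vanish.\<close>
lemma gauged_eigenvector_zero_propagates:
  fixes \<Omega> E :: real and D :: "nat \<Rightarrow> real"
  assumes \<Omega>: "\<Omega> \<noteq> 0"
    and hd: "\<And>a b. a < 2^N \<Longrightarrow> b < 2^N \<Longrightarrow>
      h a b = of_real (\<Omega> * flip_count N a b + (if a = b then D b else 0))"
    and eigen: "\<forall>a<2^N. kernel_apply (2^N) h (gauged_modulus \<Omega> N f) a
      = of_real E * gauged_modulus \<Omega> N f a"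
    and b: "b < 2^N" and fb: "f b = 0" and k: "k < N"
  shows "f (flip_bit k b) = 0"
proof -
  define \<phi> where "\<phi> = gauged_modulus \<Omega> N f"
  define \<kappa> where "\<kappa> = - \<bar>\<Omega>\<bar> * stoquastic_gauge \<Omega> N b"
  have "\<kappa> \<noteq> 0" unfolding \<kappa>_def using \<Omega> abs_stoquastic_gauge[of \<Omega> N b] by auto
  have "kernel_apply (2^N) h \<phi> b = (\<Sum>a<2^N. of_real (\<kappa> * (flip_count N b a * cmod (f a))))"
    unfolding kernel_apply_def
  proof (intro sum.cong refl)
    fix a :: nat assume "a \<in> {..<2^N}"
    then have a: "a < 2^N" by simp
    show "h b a * \<phi> a = of_real (\<kappa> * (flip_count N b a * cmod (f a)))"
    proof (cases "flip_count N b a = 0")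
      case True
      then show ?thesis unfolding hd[OF b a] \<phi>_def gauged_modulus_def using fb by auto
    next
      case False
      then have "b \<noteq> a" using flip_count_same by metis
      moreover have "\<Omega> * stoquastic_gauge \<Omega> N a = \<kappa>"
        unfolding \<kappa>_def using stoquastic_gauge_hop False flip_count_sym by metis
      ultimately show ?thesis unfolding hd[OF b a] \<phi>_def gauged_modulus_def
        by (simp add: mult.commute mult.left_commute) (metis mult.assoc of_real_mult)
    qed
  qed
  moreover have "kernel_apply (2^N) h \<phi> b = 0"
    using eigen b fb unfolding \<phi>_def by (simp add: gauged_modulus_def)
  ultimately have "complex_of_real (\<Sum>a<2^N. \<kappa> * (flip_count N b a * cmod (f a))) = 0"
    by simp
  then have "(\<Sum>a<2^N. \<kappa> * (flip_count N b a * cmod (f a))) = 0"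
    by (simp only: of_real_eq_0_iff)
  then have "(\<Sum>a<2^N. flip_count N b a * cmod (f a)) = 0"
    using \<open>\<kappa> \<noteq> 0\<close> by (simp add: sum_distrib_left[symmetric])
  then have "\<forall>a\<in>{..<2^N}. flip_count N b a * cmod (f a) = 0"
    by (subst sum_nonneg_eq_0_iff[symmetric]) (auto intro: mult_nonneg_nonneg flip_count_nonneg)
  then have "flip_count N b (flip_bit k b) * cmod (f (flip_bit k b)) = 0"
    using flip_bit_less_power2[OF k b] by simp
  then show ?thesis using flip_count_flip_bit[OF k, of b] by simp
qed

text \<open>Perron--Frobenius: the gauged modulus of a ground state is again a ground state, and it cannot
  vanish anywhere since the hypercube is connected.\<close>
lemma ground_state_nowhere_zero:
  fixes \<Omega> E :: real and D :: "nat \<Rightarrow> real"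
  assumes \<Omega>: "\<Omega> \<noteq> 0"
    and hd: "\<And>a b. a < 2^N \<Longrightarrow> b < 2^N \<Longrightarrow>
      h a b = of_real (\<Omega> * flip_count N a b + (if a = b then D b else 0))"
    and herm: "hermitian_kernel (2^N) h" and gs: "kernel_ground_state (2^N) h E f"
  shows "\<forall>a<2^N. f a \<noteq> 0"
proof -
  define \<phi> where "\<phi> = gauged_modulus \<Omega> N f"
  have norm_f: "sq_norm (2^N) f = 1" and bound: "spectrum_lower_bound (2^N) h E"
    and "Re (quad_form (2^N) h f) = E"
    using gs quad_form_eigen[of "2^N" h f E] unfolding kernel_ground_state_def by auto
  moreover have norm_\<phi>: "sq_norm (2^N) \<phi> = 1"
    using norm_f unfolding \<phi>_def sq_norm_gauged_modulus .
  ultimately have "Re (quad_form (2^N) h \<phi>) = E * sq_norm (2^N) \<phi>"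
    using gauged_modulus_quad_form_le[OF hd, of f] quad_form_ge_ground_energy[OF herm bound, of \<phi>]
    unfolding \<phi>_def by simp
  then have eigen: "\<forall>a<2^N. kernel_apply (2^N) h \<phi> a = of_real E * \<phi> a"
    by (rule ground_energy_attained_imp_eigen[OF herm bound])
  show ?thesis
  proof (rule ccontr)
    assume "\<not> (\<forall>a<2^N. f a \<noteq> 0)"
    then obtain b where "b < 2^N" "f b = 0" by auto
    then have "\<forall>c<2^N. f c = 0"
      using hypercube_induct[of "\<lambda>c. f c = 0" b N]
        gauged_eigenvector_zero_propagates[OF \<Omega> hd eigen[unfolded \<phi>_def]] by metis
    then show False using norm_f sq_norm_eq_0_iff[of "2^N" f] by simp
  qed
qed

section \<open>Ground states and correlations\<close>

lemma index_mult_mat_vec_kernel_apply: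
  assumes "A \<in> carrier_mat n n" "v \<in> carrier_vec n" "a < n"
  shows "(A *\<^sub>v v) $ a = kernel_apply n (\<lambda>a b. A $$ (a, b)) (\<lambda>b. v $ b) a"
  unfolding kernel_apply_def using assms
  by (auto simp: scalar_prod_def atLeast0LessThan intro!: sum.cong)

lemma expect_eq_quad_form:
  assumes A: "A \<in> carrier_mat n n" and v: "v \<in> carrier_vec n"
  shows "expect A v = quad_form n (\<lambda>a b. A $$ (a, b)) (\<lambda>a. v $ a)"
proof -
  have "expect A v = (\<Sum>a<n. (A *\<^sub>v v) $ a * cnj (v $ a))"
    unfolding expect_def scalar_prod_def using v by (auto simp: atLeast0LessThan intro!: sum.cong)
  then show ?thesis
    unfolding quad_form_kernel_apply using index_mult_mat_vec_kernel_apply[OF A v]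
    by (simp add: mult.commute)
qed

lemma cscalar_prod_self_eq_sq_norm:
  assumes "v \<in> carrier_vec n"
  shows "v \<bullet>c v = of_real (sq_norm n (\<lambda>a. v $ a))"
  unfolding of_real_sq_norm scalar_prod_def using assms
  by (auto simp: atLeast0LessThan mult.commute intro!: sum.cong)

lemma ground_state_kernel_ground_state:
  assumes A: "A \<in> carrier_mat n n" and gs: "ground_state A \<psi>"
  shows "\<psi> \<in> carrier_vec n \<and> (\<exists>E. kernel_ground_state n (\<lambda>a b. A $$ (a, b)) E (\<lambda>a. \<psi> $ a))"
proof -
  from gs obtain E where norm: "\<psi> \<bullet>c \<psi> = 1" and eigen: "eigenvector A \<psi> (complex_of_real E)"
    and lowest: "\<forall>\<mu>. eigenvalue A \<mu> \<longrightarrow> E \<le> Re \<mu>"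
    unfolding ground_state_def by blast
  have v: "\<psi> \<in> carrier_vec n" and A\<psi>: "A *\<^sub>v \<psi> = complex_of_real E \<cdot>\<^sub>v \<psi>"
    using eigen A unfolding eigenvector_def by auto
  have "spectrum_lower_bound n (\<lambda>a b. A $$ (a, b)) E"
    unfolding spectrum_lower_bound_def
  proof (intro allI impI)
    fix l g assume g_eigen: "\<forall>a<n. kernel_apply n (\<lambda>a b. A $$ (a, b)) g a = l * g a"
      and g_nonzero: "\<exists>a<n. g a \<noteq> 0"
    have w: "vec n g \<in> carrier_vec n" by simp
    have "A *\<^sub>v vec n g = l \<cdot>\<^sub>v vec n g"
    proof (rule eq_vecI)
      fix a assume "a < dim_vec (l \<cdot>\<^sub>v vec n g)"
      then have a: "a < n" by simp
      have "(A *\<^sub>v vec n g) $ a = kernel_apply n (\<lambda>a b. A $$ (a, b)) g a"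
        unfolding index_mult_mat_vec_kernel_apply[OF A w a] kernel_apply_def by simp
      then show "(A *\<^sub>v vec n g) $ a = (l \<cdot>\<^sub>v vec n g) $ a" using g_eigen a by simp
    qed (use A in simp)
    moreover have "vec n g \<noteq> 0\<^sub>v n" using g_nonzero by (metis index_vec index_zero_vec(1))
    ultimately have "eigenvalue A l"
      unfolding eigenvalue_def eigenvector_def using A by (auto intro!: exI[of _ "vec n g"])
    then show "E \<le> Re l" using lowest by blast
  qed
  moreover have "sq_norm n (\<lambda>a. \<psi> $ a) = 1" using norm cscalar_prod_self_eq_sq_norm[OF v] by simp
  moreover have "\<forall>a<n. kernel_apply n (\<lambda>a b. A $$ (a, b)) (\<lambda>a. \<psi> $ a) a = of_real E * \<psi> $ a"
    using index_mult_mat_vec_kernel_apply[OF A v] A\<psi> v by (metis index_smult_vec(1) carrier_vecD)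
  ultimately show ?thesis unfolding kernel_ground_state_def using v by blast
qed

definition spin_correlation :: "nat \<Rightarrow> (nat \<Rightarrow> complex) \<Rightarrow> nat \<Rightarrow> nat \<Rightarrow> real" where
  "spin_correlation N f i j = (\<Sum>a<2^N. spin_sign N i a * spin_sign N j a * (cmod (f a))^2)"

lemma spin_z_mult:
  "spin_z hbar N i * spin_z hbar N j = complex_of_real (hbar / 2) \<cdot>\<^sub>m
    (complex_of_real (hbar / 2) \<cdot>\<^sub>m (sigma_z N i * sigma_z N j))"
proof -
  let ?c = "complex_of_real (hbar / 2)"
  have "spin_z hbar N i * spin_z hbar N j = ?c \<cdot>\<^sub>m (sigma_z N i * (?c \<cdot>\<^sub>m sigma_z N j))"
    unfolding spin_z_def
    by (rule mult_smult_assoc_mat[OF sigma_z_carrier smult_carrier_mat[OF sigma_z_carrier]])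
  also have "\<dots> = ?c \<cdot>\<^sub>m (?c \<cdot>\<^sub>m (sigma_z N i * sigma_z N j))"
    by (subst mult_smult_distrib[OF sigma_z_carrier sigma_z_carrier]) rule
  finally show ?thesis .
qed

lemma correlation_eq_spin_correlation:
  assumes "\<psi> \<in> carrier_vec (2^N)"
  shows "correlation hbar N \<psi> i j = of_real ((hbar / 2)^2 * spin_correlation N (\<lambda>a. \<psi> $ a) i j)"
proof -
  have "correlation hbar N \<psi> i j
      = quad_form (2^N) (\<lambda>a b. (spin_z hbar N i * spin_z hbar N j) $$ (a, b)) (\<lambda>a. \<psi> $ a)"
    unfolding correlation_def spin_z_mult
    by (rule expect_eq_quad_form[OF smult_carrier_mat[OF smult_carrier_mat[OF sigma_zz_carrier]] assms])
  also have "\<dots> = of_real (\<Sum>a<2^N. (hbar / 2)^2 * (spin_sign N i a * spin_sign N j a) * (cmod (\<psi> $ a))^2)"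
    by (rule quad_form_diagonal) (simp add: spin_z_mult index_sigma_zz power2_eq_square del: index_mult_mat(1))
  finally show ?thesis
    unfolding spin_correlation_def by (simp add: sum_distrib_left mult.assoc)
qed

lemma spin_correlation_eq_if_correlation_eq:
  assumes "hbar \<noteq> 0" "\<psi>1 \<in> carrier_vec (2^N)" "\<psi>2 \<in> carrier_vec (2^N)"
    and "correlation hbar N \<psi>1 i j = correlation hbar N \<psi>2 i j"
  shows "spin_correlation N (\<lambda>a. \<psi>1 $ a) i j = spin_correlation N (\<lambda>a. \<psi>2 $ a) i j"
  using assms correlation_eq_spin_correlation[OF assms(2)] correlation_eq_spin_correlation[OF assms(3)]
  by simp

lemma ising_energy_expectation:
  "(\<Sum>a<2^N. ising_energy N K a * (cmod (f a))^2)
    = (\<Sum>i\<in>{1..<N+1}. \<Sum>j\<in>{i+1..<N+1}. K i j * spin_correlation N f i j)"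
  unfolding ising_energy_def spin_correlation_def sum_distrib_right sum_distrib_left
  by (subst sum.swap, subst (2) sum.swap) (simp add: algebra_simps)

theorem mainTheorem4:
  fixes N :: nat and \<Omega> \<delta> hbar :: real
    and J1 J2 :: "nat \<Rightarrow> nat \<Rightarrow> real" and \<psi>1 \<psi>2 :: "complex vec"
  assumes "N \<ge> 2" and "\<Omega> \<noteq> 0" and "hbar > 0"
    and "ground_state (hamiltonian N \<Omega> \<delta> J1) \<psi>1"
    and "ground_state (hamiltonian N \<Omega> \<delta> J2) \<psi>2"
    and "\<forall>i j. 1 \<le> i \<and> i < j \<and> j \<le> N \<longrightarrow>
           correlation hbar N \<psi>1 i j = correlation hbar N \<psi>2 i j"
  shows "\<forall>i j. 1 \<le> i \<and> i < j \<and> j \<le> N \<longrightarrow> J1 i j = J2 i j"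
proof -
  define K where "K = (\<lambda>i j. J1 i j - J2 i j)"
  obtain E1 E2 where v: "\<psi>1 \<in> carrier_vec (2^N)" "\<psi>2 \<in> carrier_vec (2^N)"
    and gs1: "kernel_ground_state (2^N) (\<lambda>a b. hamiltonian N \<Omega> \<delta> J1 $$ (a, b)) E1 (\<lambda>a. \<psi>1 $ a)"
    and gs2: "kernel_ground_state (2^N) (\<lambda>a b. hamiltonian N \<Omega> \<delta> J2 $$ (a, b)) E2 (\<lambda>a. \<psi>2 $ a)"
    using ground_state_kernel_ground_state[OF hamiltonian_carrier] assms(4,5) by meson
  have "spin_correlation N (\<lambda>a. \<psi>1 $ a) i j = spin_correlation N (\<lambda>a. \<psi>2 $ a) i j"
    if "1 \<le> i" "i < j" "j \<le> N" for i j
    by (rule spin_correlation_eq_if_correlation_eq[OF _ v]) (use assms(3,6) that in auto)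
  then have "(\<Sum>a<2^N. ising_energy N K a * (cmod (\<psi>1 $ a))^2)
      = (\<Sum>a<2^N. ising_energy N K a * (cmod (\<psi>2 $ a))^2)"
    unfolding ising_energy_expectation by (intro sum.cong refl) auto
  then have "\<forall>a<2^N. of_real (ising_energy N K a) * \<psi>2 $ a = of_real (E1 - E2) * \<psi>2 $ a"
    using ground_state_diagonal_perturbation[OF hamiltonian_hermitian hamiltonian_hermitian _ gs1 gs2]
      index_hamiltonian_diff unfolding K_def by blast
  moreover have "\<forall>a<2^N. \<psi>2 $ a \<noteq> 0"
    by (rule ground_state_nowhere_zero[OF assms(2) index_hamiltonian hamiltonian_hermitian gs2])
  ultimately have "\<forall>a<2^N. ising_energy N K a = E1 - E2" by (simp del: of_real_diff)
  then have "K i j = 0" if "1 \<le> i" "i < j" "j \<le> N" for i j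
    using ising_energy_const_imp_zero that by blast
  then show ?thesis unfolding K_def by simp
qed

end
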